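(* If $Q$ and $Q'$ are proper quadrilaterals in $K^2$ sharing the same vertices, then two lines are $Q$-orthogonal if and only if they are $Q'$-orthogonal.
   Context: $K$ is a field of characteristic $\neq 2$. Every line $L$ in $K^2$ has an equation $tX-uY+v=0$ normalized so that $t=1$ if $u=0$ and $u=1$ if $u\neq 0$; coefficients denoted $t_L,u_L,v_L$. A quadrilateral $Q=ABA'B'$ consists of four distinct lines $A,B,A',B'$ (sides), not all through one point, with adjacent sides ($A,B$; $B,A'$; $A',B'$; $B',A$) not parallel; opposite sides may be parallel. Vertices: $A\cap B$, $B\cap A'$, $A'\cap B'$, $B'\cap A$. $Q$ is proper if no three sides pass through a common point. Let $\alpha=t_Au_Bu_{A'}u_{B'}-u_At_Bu_{A'}u_{B'}+u_Au_Bt_{A'}u_{B'}-u_Au_Bu_{A'}t_{B'}$, $\beta=t_Au_Bt_{A'}u_{B'}-u_At_Bu_{A'}t_{B'}$, $\gamma=t_At_Bt_{A'}u_{B'}-t_At_Bu_{A'}t_{B'}+t_Au_Bt_{A'}t_{B'}-u_At_Bt_{A'}t_{B'}$, and $\langle \mathbf v,\mathbf w\rangle_Q=\mathbf v^T\begin{pmatrix}\gamma&-\beta\\-\beta&\alpha\end{pmatrix}\mathbf w$. Lines $\ell_1,\ell_2$ are $Q$-orthogonal if $\langle (u_{\ell_1},t_{\ell_1}),(u_{\ell_2},t_{\ell_2})\rangle_Q=0$. *)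

theory Defs
  imports Main
begin

text \<open>A line in K^2 is represented by its normalized coefficient triple (t,u,v),
  standing for the line t*X - u*Y + v = 0, normalized so that t = 1 if u = 0
  and u = 1 if u is nonzero. Each line has exactly one such triple.\<close>

type_synonym 'a line = "'a \<times> 'a \<times> 'a"

definition tL :: "'a line \<Rightarrow> 'a" where "tL L = fst L"
definition uL :: "'a line \<Rightarrow> 'a" where "uL L = fst (snd L)"
definition vL :: "'a line \<Rightarrow> 'a" where "vL L = snd (snd L)"

definition is_line :: "'a::field line \<Rightarrow> bool" where
  "is_line L \<longleftrightarrow> (uL L = 0 \<and> tL L = 1) \<or> uL L = 1"

definition line_pts :: "'a::field line \<Rightarrow> ('a \<times> 'a) set" where
  "line_pts L = {(x, y). tL L * x - uL L * y + vL L = 0}"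

definition parallel :: "'a::field line \<Rightarrow> 'a line \<Rightarrow> bool" where
  "parallel L M \<longleftrightarrow> line_pts L = line_pts M \<or> line_pts L \<inter> line_pts M = {}"

definition meet :: "'a::field line \<Rightarrow> 'a line \<Rightarrow> 'a \<times> 'a" where
  "meet L M = (THE p. p \<in> line_pts L \<and> p \<in> line_pts M)"

definition concurrent3 :: "'a::field line \<Rightarrow> 'a line \<Rightarrow> 'a line \<Rightarrow> bool" where
  "concurrent3 L M N \<longleftrightarrow> (\<exists>p. p \<in> line_pts L \<and> p \<in> line_pts M \<and> p \<in> line_pts N)"

definition is_quad :: "'a::field line \<Rightarrow> 'a line \<Rightarrow> 'a line \<Rightarrow> 'a line \<Rightarrow> bool" where
  "is_quad A B A' B' \<longleftrightarrow>
     is_line A \<and> is_line B \<and> is_line A' \<and> is_line B' \<and>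
     distinct [A, B, A', B'] \<and>
     \<not> (\<exists>p. p \<in> line_pts A \<and> p \<in> line_pts B \<and> p \<in> line_pts A' \<and> p \<in> line_pts B') \<and>
     \<not> parallel A B \<and> \<not> parallel B A' \<and> \<not> parallel A' B' \<and> \<not> parallel B' A"

definition quad_vertices :: "'a::field line \<Rightarrow> 'a line \<Rightarrow> 'a line \<Rightarrow> 'a line \<Rightarrow> ('a \<times> 'a) set" where
  "quad_vertices A B A' B' = {meet A B, meet B A', meet A' B', meet B' A}"

definition proper_quad :: "'a::field line \<Rightarrow> 'a line \<Rightarrow> 'a line \<Rightarrow> 'a line \<Rightarrow> bool" where
  "proper_quad A B A' B' \<longleftrightarrow> is_quad A B A' B' \<and>
     \<not> concurrent3 A B A' \<and> \<not> concurrent3 A B B' \<and>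
     \<not> concurrent3 A A' B' \<and> \<not> concurrent3 B A' B'"

definition qalpha :: "'a::field line \<Rightarrow> 'a line \<Rightarrow> 'a line \<Rightarrow> 'a line \<Rightarrow> 'a" where
  "qalpha A B A' B' =
     tL A * uL B * uL A' * uL B' - uL A * tL B * uL A' * uL B'
   + uL A * uL B * tL A' * uL B' - uL A * uL B * uL A' * tL B'"

definition qbeta :: "'a::field line \<Rightarrow> 'a line \<Rightarrow> 'a line \<Rightarrow> 'a line \<Rightarrow> 'a" where
  "qbeta A B A' B' = tL A * uL B * tL A' * uL B' - uL A * tL B * uL A' * tL B'"

definition qgamma :: "'a::field line \<Rightarrow> 'a line \<Rightarrow> 'a line \<Rightarrow> 'a line \<Rightarrow> 'a" where
  "qgamma A B A' B' =
     tL A * tL B * tL A' * uL B' - tL A * tL B * uL A' * tL B'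
   + tL A * uL B * tL A' * tL B' - uL A * tL B * tL A' * tL B'"

definition q_inner :: "'a::field line \<Rightarrow> 'a line \<Rightarrow> 'a line \<Rightarrow> 'a line \<Rightarrow> 'a \<times> 'a \<Rightarrow> 'a \<times> 'a \<Rightarrow> 'a" where
  "q_inner A B A' B' v w =
     qgamma A B A' B' * fst v * fst w - qbeta A B A' B' * fst v * snd w
   - qbeta A B A' B' * snd v * fst w + qalpha A B A' B' * snd v * snd w"

definition q_orth :: "'a::field line \<Rightarrow> 'a line \<Rightarrow> 'a line \<Rightarrow> 'a line \<Rightarrow> 'a line \<Rightarrow> 'a line \<Rightarrow> bool" where
  "q_orth A B A' B' l1 l2 \<longleftrightarrow> q_inner A B A' B' (uL l1, tL l1) (uL l2, tL l2) = 0"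

end

theory Submission
  imports Defs
begin

text \<open>Each side of a quadrilateral passes through two consecutive vertices, so its coefficients
  \<open>(t, u)\<close> are a nonzero multiple of the coordinate differences of these vertices. As the form
  is multilinear in the coefficients of the four sides, the form of a proper quadrilateral
  with vertices \<open>P\<^sub>1, P\<^sub>2, P\<^sub>3, P\<^sub>4\<close> is a nonzero multiple of a form \<open>vertex_form P\<^sub>1 P\<^sub>2 P\<^sub>3 P\<^sub>4\<close> that
  depends polynomially on the vertices only. This polynomial changes sign under every
  transposition of vertices, so its zero set, and with it \<open>Q\<close>-orthogonality, depends only on
  the set of vertices.\<close>

lemma alternating_eq_0_permute4:
  fixes f :: "'p \<Rightarrow> 'p \<Rightarrow> 'p \<Rightarrow> 'p \<Rightarrow> 'b::group_add"
  assumes swap12: "\<And>a b c d. f b a c d = - f a b c d"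
    and swap23: "\<And>a b c d. f a c b d = - f a b c d"
    and swap34: "\<And>a b c d. f a b d c = - f a b c d"
    and same: "{r1, r2, r3, r4} = {p1, p2, p3, p4}" and "distinct [r1, r2, r3, r4]"
  shows "f r1 r2 r3 r4 = 0 \<longleftrightarrow> f p1 p2 p3 p4 = 0"
proof -
  \<comment> \<open>Permutative rules: ordered rewriting sorts the arguments of \<open>f\<close>, so every case of the
    split below reduces to a trivial equivalence.\<close>
  have sort12: "f b a c d = 0 \<longleftrightarrow> f a b c d = 0"
    and sort23: "f a c b d = 0 \<longleftrightarrow> f a b c d = 0"
    and sort34: "f a b d c = 0 \<longleftrightarrow> f a b c d = 0" for a b c d
    using swap12[of a b c d] swap23[of a b c d] swap34[of a b c d] by simp_all
  have "r1 \<in> {p1, p2, p3, p4}" "r2 \<in> {p1, p2, p3, p4}" "r3 \<in> {p1, p2, p3, p4}" "r4 \<in> {p1, p2, p3, p4}"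
    using same by blast+
  then show ?thesis
    using \<open>distinct [r1, r2, r3, r4]\<close>
    by (elim insertE emptyE) (simp_all add: sort12 sort23 sort34)
qed

lemma proportional_if_cross_eq:
  fixes t u x y :: "'a::field"
  assumes cross: "t * x = u * y" and tu: "t \<noteq> 0 \<or> u \<noteq> 0" and xy: "x \<noteq> 0 \<or> y \<noteq> 0"
  shows "\<exists>k. k \<noteq> 0 \<and> t = k * y \<and> u = k * x"
proof (cases "x = 0")
  case True
  with cross xy tu have "u = 0" "y \<noteq> 0" "t \<noteq> 0" by auto
  with True show ?thesis by (intro exI[of _ "t / y"]) simp
next
  case False
  with cross tu have "u \<noteq> 0" "t = u / x * y" by (auto simp: field_simps)
  with False show ?thesis by (intro exI[of _ "u / x"]) simp
qed

definition dir_line :: "'a::field \<times> 'a \<Rightarrow> 'a \<times> 'a \<Rightarrow> 'a line" where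
  "dir_line p q = (snd q - snd p, fst q - fst p, 0)"

lemma tL_dir_line [simp]: "tL (dir_line p q) = snd q - snd p"
  and uL_dir_line [simp]: "uL (dir_line p q) = fst q - fst p"
  by (simp_all add: dir_line_def tL_def uL_def)

lemma line_coeffs_proportional_dir_line:
  assumes L: "is_line L" and "p \<in> line_pts L" "q \<in> line_pts L" "p \<noteq> q"
  shows "\<exists>k. k \<noteq> 0 \<and> tL L = k * tL (dir_line p q) \<and> uL L = k * uL (dir_line p q)"
proof -
  obtain px py qx qy where pq: "p = (px, py)" "q = (qx, qy)" by fastforce
  have "tL L * px - uL L * py + vL L = 0" "tL L * qx - uL L * qy + vL L = 0"
    using assms(2,3) pq by (simp_all add: line_pts_def)
  then have "(tL L * qx - uL L * qy + vL L) - (tL L * px - uL L * py + vL L) = 0" by simp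
  then have "tL L * (qx - px) = uL L * (qy - py)" by (simp add: algebra_simps)
  moreover have "tL L \<noteq> 0 \<or> uL L \<noteq> 0" using L by (auto simp: is_line_def)
  moreover have "qx - px \<noteq> 0 \<or> qy - py \<noteq> 0" using \<open>p \<noteq> q\<close> pq by auto
  ultimately obtain k where "k \<noteq> 0" "tL L = k * (qy - py)" "uL L = k * (qx - px)"
    by (blast dest: proportional_if_cross_eq)
  with pq show ?thesis by (intro exI[of _ k]) simp
qed

lemma line_eqI:
  assumes L: "is_line L" and M: "is_line M" and "p \<noteq> q"
    and pL: "p \<in> line_pts L" and qL: "q \<in> line_pts L"
    and pM: "p \<in> line_pts M" and qM: "q \<in> line_pts M"
  shows "L = M"
proof -
  obtain k where k: "k \<noteq> 0" "tL L = k * tL (dir_line p q)" "uL L = k * uL (dir_line p q)"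
    using line_coeffs_proportional_dir_line[OF L pL qL \<open>p \<noteq> q\<close>] by blast
  obtain k' where k': "k' \<noteq> 0" "tL M = k' * tL (dir_line p q)" "uL M = k' * uL (dir_line p q)"
    using line_coeffs_proportional_dir_line[OF M pM qM \<open>p \<noteq> q\<close>] by blast
  have tu: "tL L = tL M \<and> uL L = uL M"
  proof (cases "uL (dir_line p q) = 0")
    case True
    then show ?thesis using k k' L M by (simp add: is_line_def)
  next
    case False
    then have "uL L = 1" "uL M = 1" using k k' L M by (auto simp: is_line_def)
    with k k' have "k * uL (dir_line p q) = k' * uL (dir_line p q)" by simp
    with False have "k = k'" by simp
    with k k' show ?thesis by simp
  qed
  moreover have "vL L = vL M"
    using pL pM tu by (cases p) (simp add: line_pts_def eq_neg_iff_add_eq_0 add_eq_0_iff)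
  ultimately show ?thesis by (simp add: tL_def uL_def vL_def prod_eq_iff)
qed

lemma meet_in_line_pts:
  assumes L: "is_line L" and M: "is_line M" and "\<not> parallel L M"
  shows "meet L M \<in> line_pts L" "meet L M \<in> line_pts M"
proof -
  obtain p where p: "p \<in> line_pts L" "p \<in> line_pts M"
    using \<open>\<not> parallel L M\<close> by (auto simp: parallel_def)
  have "x = p" if "x \<in> line_pts L" "x \<in> line_pts M" for x
    using line_eqI[OF L M _ that(1) p(1) that(2) p(2)] \<open>\<not> parallel L M\<close> by (auto simp: parallel_def)
  with p have "meet L M = p"
    unfolding meet_def by blast
  with p show "meet L M \<in> line_pts L" "meet L M \<in> line_pts M" by simp_all
qed

lemma q_inner_scale:
  assumes "tL X1 = k1 * tL Y1" "uL X1 = k1 * uL Y1"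
    and "tL X2 = k2 * tL Y2" "uL X2 = k2 * uL Y2"
    and "tL X3 = k3 * tL Y3" "uL X3 = k3 * uL Y3"
    and "tL X4 = k4 * tL Y4" "uL X4 = k4 * uL Y4"
  shows "q_inner X1 X2 X3 X4 v w = (k1 * k2 * k3 * k4) * q_inner Y1 Y2 Y3 Y4 v w"
  unfolding q_inner_def qalpha_def qbeta_def qgamma_def assms
  by (simp add: algebra_simps)

definition vertex_form ::
    "'a::field \<times> 'a \<Rightarrow> 'a \<times> 'a \<Rightarrow> 'a \<times> 'a \<Rightarrow> 'a \<times> 'a \<Rightarrow> 'a \<times> 'a \<Rightarrow> 'a \<times> 'a \<Rightarrow> 'a" where
  "vertex_form p1 p2 p3 p4 =
     q_inner (dir_line p4 p1) (dir_line p1 p2) (dir_line p2 p3) (dir_line p3 p4)"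

lemma vertex_form_swap12: "vertex_form b a c d v w = - vertex_form a b c d v w"
  and vertex_form_swap23: "vertex_form a c b d v w = - vertex_form a b c d v w"
  and vertex_form_swap34: "vertex_form a b d c v w = - vertex_form a b c d v w"
  unfolding vertex_form_def q_inner_def qalpha_def qbeta_def qgamma_def
  by (simp_all add: algebra_simps)

lemma vertex_form_eq_0_permute:
  assumes "{r1, r2, r3, r4} = {p1, p2, p3, p4}" "distinct [r1, r2, r3, r4]"
  shows "vertex_form r1 r2 r3 r4 v w = 0 \<longleftrightarrow> vertex_form p1 p2 p3 p4 v w = 0"
  using alternating_eq_0_permute4[where f = "\<lambda>a b c d. vertex_form a b c d v w",
      OF vertex_form_swap12 vertex_form_swap23 vertex_form_swap34 assms] .

lemma proper_quad_vertices:
  assumes "proper_quad A B A' B'"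
  shows "meet A B \<in> line_pts A" "meet A B \<in> line_pts B"
    and "meet B A' \<in> line_pts B" "meet B A' \<in> line_pts A'"
    and "meet A' B' \<in> line_pts A'" "meet A' B' \<in> line_pts B'"
    and "meet B' A \<in> line_pts B'" "meet B' A \<in> line_pts A"
    and "distinct [meet A B, meet B A', meet A' B', meet B' A]"
proof -
  have "is_line A" "is_line B" "is_line A'" "is_line B'"
    and "\<not> parallel A B" "\<not> parallel B A'" "\<not> parallel A' B'" "\<not> parallel B' A"
    and no4: "\<not> (\<exists>p. p \<in> line_pts A \<and> p \<in> line_pts B \<and> p \<in> line_pts A' \<and> p \<in> line_pts B')"
    and no3: "\<not> concurrent3 A B A'" "\<not> concurrent3 A B B'"
      "\<not> concurrent3 A A' B'" "\<not> concurrent3 B A' B'"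
    using assms by (auto simp: proper_quad_def is_quad_def)
  then show on_sides: "meet A B \<in> line_pts A" "meet A B \<in> line_pts B"
    "meet B A' \<in> line_pts B" "meet B A' \<in> line_pts A'"
    "meet A' B' \<in> line_pts A'" "meet A' B' \<in> line_pts B'"
    "meet B' A \<in> line_pts B'" "meet B' A \<in> line_pts A"
    by (simp_all add: meet_in_line_pts)
  have "meet A B \<noteq> meet B A'" using on_sides no3(1) unfolding concurrent3_def by metis
  moreover have "meet A B \<noteq> meet A' B'" using on_sides no4 by metis
  moreover have "meet A B \<noteq> meet B' A" using on_sides no3(2) unfolding concurrent3_def by metis
  moreover have "meet B A' \<noteq> meet A' B'" using on_sides no3(4) unfolding concurrent3_def by metis
  moreover have "meet B A' \<noteq> meet B' A" using on_sides no4 by metis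
  moreover have "meet A' B' \<noteq> meet B' A" using on_sides no3(3) unfolding concurrent3_def by metis
  ultimately show "distinct [meet A B, meet B A', meet A' B', meet B' A]" by simp
qed

lemma q_inner_proper_quad:
  assumes "proper_quad A B A' B'"
  shows "\<exists>c. c \<noteq> 0 \<and> (\<forall>v w. q_inner A B A' B' v w =
            c * vertex_form (meet A B) (meet B A') (meet A' B') (meet B' A) v w)"
proof -
  have lines: "is_line A" "is_line B" "is_line A'" "is_line B'"
    using assms by (simp_all add: proper_quad_def is_quad_def)
  note V = proper_quad_vertices[OF assms]
  obtain kA kB kA' kB' where k: "kA \<noteq> 0" "kB \<noteq> 0" "kA' \<noteq> 0" "kB' \<noteq> 0"
    and scale: "tL A = kA * tL (dir_line (meet B' A) (meet A B))"
        "uL A = kA * uL (dir_line (meet B' A) (meet A B))"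
        "tL B = kB * tL (dir_line (meet A B) (meet B A'))"
        "uL B = kB * uL (dir_line (meet A B) (meet B A'))"
        "tL A' = kA' * tL (dir_line (meet B A') (meet A' B'))"
        "uL A' = kA' * uL (dir_line (meet B A') (meet A' B'))"
        "tL B' = kB' * tL (dir_line (meet A' B') (meet B' A))"
        "uL B' = kB' * uL (dir_line (meet A' B') (meet B' A))"
    using line_coeffs_proportional_dir_line[OF lines(1) V(8,1)]
      line_coeffs_proportional_dir_line[OF lines(2) V(2,3)]
      line_coeffs_proportional_dir_line[OF lines(3) V(4,5)]
      line_coeffs_proportional_dir_line[OF lines(4) V(6,7)] V(9)
    by auto
  have "q_inner A B A' B' v w = (kA * kB * kA' * kB') *
      vertex_form (meet A B) (meet B A') (meet A' B') (meet B' A) v w" for v w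
    unfolding vertex_form_def using scale by (rule q_inner_scale)
  with k show ?thesis by (intro exI[of _ "kA * kB * kA' * kB'"]) simp
qed

lemma q_orth_proper_quad_iff:
  assumes "proper_quad A B A' B'"
  shows "q_orth A B A' B' l1 l2 \<longleftrightarrow>
    vertex_form (meet A B) (meet B A') (meet A' B') (meet B' A) (uL l1, tL l1) (uL l2, tL l2) = 0"
  using q_inner_proper_quad[OF assms] by (auto simp: q_orth_def)

theorem corollary2p7:
  fixes A B A' B' C D C' D' l1 l2 :: "'a::field line"
  assumes char: "(2::'a) \<noteq> 0"
    and Q: "proper_quad A B A' B'"
    and Q': "proper_quad C D C' D'"
    and same_vertices: "quad_vertices A B A' B' = quad_vertices C D C' D'"
    and l1: "is_line l1" and l2: "is_line l2"
  shows "q_orth A B A' B' l1 l2 \<longleftrightarrow> q_orth C D C' D' l1 l2"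
proof -
  have "{meet C D, meet D C', meet C' D', meet D' C} = {meet A B, meet B A', meet A' B', meet B' A}"
    using same_vertices by (simp add: quad_vertices_def)
  from vertex_form_eq_0_permute[OF this proper_quad_vertices(9)[OF Q']] show ?thesis
    unfolding q_orth_proper_quad_iff[OF Q] q_orth_proper_quad_iff[OF Q'] by simp
qed

end
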